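(* Let $M=(W,\bm{\Box},V)$ be a transitive, monotonic and regular neighborhood model, $\Sigma$ a set of formulas closed under subformulas, and $M^{T}_f$ the transitive filtration of $M$ through $\Sigma$. Then $M^{T\bullet}_f=(W_f,\bm{\Box}^{T\bullet}_f,V_f)$ is a filtration of $M$ through $\Sigma$, i.e. $\bm{\Box}^{T\bullet}_f\widetilde{|\varphi|}_M=\widetilde{|\Box\varphi|}_M$ for every formula $\Box\varphi\in\Sigma$.
   Context: A neighborhood model is $M=(W,\bm{\Box},V)$ with $W\neq\varnothing$, $\bm{\Box}:\mathcal P(W)\to\mathcal P(W)$, $V:Var\to\mathcal P(W)$; truth sets: $|p|_M=V(p)$, $|\neg\varphi|_M=W\setminus|\varphi|_M$, $|\varphi\wedge\psi|_M=|\varphi|_M\cap|\psi|_M$, $|\Box\varphi|_M=\bm{\Box}|\varphi|_M$. $M$ is transitive if $\bm{\Box}X\subseteq\bm{\Box}\bm{\Box}X$, monotonic if $X\subseteq Y\Rightarrow\bm{\Box}X\subseteq\bm{\Box}Y$, regular if $\bm{\Box}X\cap\bm{\Box}Y\subseteq\bm{\Box}(X\cap Y)$, for all $X,Y\subseteq W$. For $\Sigma$ closed under subformulas, $w\sim v$ iff $w,v$ satisfy the same formulas of $\Sigma$; $\widetilde w$ is the class of $w$, $W_f=\{\widetilde w:w\in W\}$, $\widetilde X=\{\widetilde w:w\in X\}$, $V_f(p)=\widetilde{|p|}_M$. A filtration of $M$ through $\Sigma$ is a model $(W_f,\bm{\Box}_f,V_f)$ with $\bm{\Box}_f\widetilde{|\varphi|}_M=\widetilde{|\Box\varphi|}_M$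 whenever $\Box\varphi\in\Sigma$. The minimal filtration has $\bm{\Box}^{-}_fX=\widetilde{|\Box\varphi|}_M$ if $X=\widetilde{|\varphi|}_M$ for some formula $\Box\varphi\in\Sigma$, and $\varnothing$ otherwise. For a function $\bm{\Box}':\mathcal P(U)\to\mathcal P(U)$: $\widehat{\bm{\Box}'}X=X$ if $X=\bm{\Box}'Y$ for some $Y$, else $\varnothing$; $\bm{\Box}'^{\#}X=\bigcup\{\bm{\Box}'Y:Y\subseteq X\}$; $\bm{\Box}'^{*}X=\bigcup\{\bm{\Box}'X_1\cap\dots\cap\bm{\Box}'X_n:n\ge1,\ X=X_1\cap\dots\cap X_n\}$; $\bm{\Box}'^{\bullet}=\bm{\Box}'^{*\#}$. The transitive filtration has $\bm{\Box}^{T}_fX=\bm{\Box}^{-}_fX\cup\widehat{\bm{\Box}^{-}_f}X$, and $\bm{\Box}^{T\bullet}_f=(\bm{\Box}^{T}_f)^{\bullet}$. *)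

theory Defs
  imports Main
begin

datatype 'v fm = Var 'v | Neg "'v fm" | Conj "'v fm" "'v fm" | Box "'v fm"

fun subfms :: "'v fm \<Rightarrow> 'v fm set" where
  "subfms (Var p) = {Var p}"
| "subfms (Neg a) = insert (Neg a) (subfms a)"
| "subfms (Conj a b) = insert (Conj a b) (subfms a \<union> subfms b)"
| "subfms (Box a) = insert (Box a) (subfms a)"

definition sub_closed :: "'v fm set \<Rightarrow> bool" where
  "sub_closed \<Sigma> \<longleftrightarrow> (\<forall>\<phi>\<in>\<Sigma>. subfms \<phi> \<subseteq> \<Sigma>)"

definition nbhd_model :: "'w set \<Rightarrow> ('w set \<Rightarrow> 'w set) \<Rightarrow> ('v \<Rightarrow> 'w set) \<Rightarrow> bool" where
  "nbhd_model W N V \<longleftrightarrow> W \<noteq> {} \<and> (\<forall>X. X \<subseteq> W \<longrightarrow> N X \<subseteq> W) \<and> (\<forall>p. V p \<subseteq> W)"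

fun tset :: "'w set \<Rightarrow> ('w set \<Rightarrow> 'w set) \<Rightarrow> ('v \<Rightarrow> 'w set) \<Rightarrow> 'v fm \<Rightarrow> 'w set" where
  "tset W N V (Var p) = V p"
| "tset W N V (Neg a) = W - tset W N V a"
| "tset W N V (Conj a b) = tset W N V a \<inter> tset W N V b"
| "tset W N V (Box a) = N (tset W N V a)"

definition transitive_nb :: "'w set \<Rightarrow> ('w set \<Rightarrow> 'w set) \<Rightarrow> bool" where
  "transitive_nb W N \<longleftrightarrow> (\<forall>X. X \<subseteq> W \<longrightarrow> N X \<subseteq> N (N X))"

definition monotonic_nb :: "'w set \<Rightarrow> ('w set \<Rightarrow> 'w set) \<Rightarrow> bool" where
  "monotonic_nb W N \<longleftrightarrow> (\<forall>X Y. X \<subseteq> Y \<and> Y \<subseteq> W \<longrightarrow> N X \<subseteq> N Y)"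

definition regular_nb :: "'w set \<Rightarrow> ('w set \<Rightarrow> 'w set) \<Rightarrow> bool" where
  "regular_nb W N \<longleftrightarrow> (\<forall>X Y. X \<subseteq> W \<and> Y \<subseteq> W \<longrightarrow> N X \<inter> N Y \<subseteq> N (X \<inter> Y))"

definition cls :: "'w set \<Rightarrow> ('w set \<Rightarrow> 'w set) \<Rightarrow> ('v \<Rightarrow> 'w set) \<Rightarrow> 'v fm set \<Rightarrow> 'w \<Rightarrow> 'w set" where
  "cls W N V \<Sigma> w = {v \<in> W. \<forall>\<phi>\<in>\<Sigma>. (w \<in> tset W N V \<phi> \<longleftrightarrow> v \<in> tset W N V \<phi>)}"

definition tl_set :: "'w set \<Rightarrow> ('w set \<Rightarrow> 'w set) \<Rightarrow> ('v \<Rightarrow> 'w set) \<Rightarrow> 'v fm set \<Rightarrow> 'w set \<Rightarrow> 'w set set" where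
  "tl_set W N V \<Sigma> X = cls W N V \<Sigma> ` X"

definition Wf :: "'w set \<Rightarrow> ('w set \<Rightarrow> 'w set) \<Rightarrow> ('v \<Rightarrow> 'w set) \<Rightarrow> 'v fm set \<Rightarrow> 'w set set" where
  "Wf W N V \<Sigma> = tl_set W N V \<Sigma> W"

definition Vf :: "'w set \<Rightarrow> ('w set \<Rightarrow> 'w set) \<Rightarrow> ('v \<Rightarrow> 'w set) \<Rightarrow> 'v fm set \<Rightarrow> 'v \<Rightarrow> 'w set set" where
  "Vf W N V \<Sigma> p = tl_set W N V \<Sigma> (V p)"

definition is_filtration :: "'w set \<Rightarrow> ('w set \<Rightarrow> 'w set) \<Rightarrow> ('v \<Rightarrow> 'w set) \<Rightarrow> 'v fm set
    \<Rightarrow> ('w set set \<Rightarrow> 'w set set) \<Rightarrow> bool" where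
  "is_filtration W N V \<Sigma> Bf \<longleftrightarrow>
     nbhd_model (Wf W N V \<Sigma>) Bf (Vf W N V \<Sigma>) \<and>
     (\<forall>\<phi>. Box \<phi> \<in> \<Sigma> \<longrightarrow>
        Bf (tl_set W N V \<Sigma> (tset W N V \<phi>)) = tl_set W N V \<Sigma> (tset W N V (Box \<phi>)))"

text \<open>Minimal filtration (well defined since \<Sigma> is closed under subformulas; written as
  the union over all witnesses, which is a single set in that case).\<close>
definition box_min :: "'w set \<Rightarrow> ('w set \<Rightarrow> 'w set) \<Rightarrow> ('v \<Rightarrow> 'w set) \<Rightarrow> 'v fm set
    \<Rightarrow> 'w set set \<Rightarrow> 'w set set" where
  "box_min W N V \<Sigma> X = \<Union>{tl_set W N V \<Sigma> (tset W N V (Box \<phi>)) | \<phi>.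
       Box \<phi> \<in> \<Sigma> \<and> X = tl_set W N V \<Sigma> (tset W N V \<phi>)}"

definition hat_op :: "'a set \<Rightarrow> ('a set \<Rightarrow> 'a set) \<Rightarrow> 'a set \<Rightarrow> 'a set" where
  "hat_op U B X = (if \<exists>Y. Y \<subseteq> U \<and> X = B Y then X else {})"

definition sharp_op :: "'a set \<Rightarrow> ('a set \<Rightarrow> 'a set) \<Rightarrow> 'a set \<Rightarrow> 'a set" where
  "sharp_op U B X = \<Union>{B Y | Y. Y \<subseteq> X}"

definition star_op :: "'a set \<Rightarrow> ('a set \<Rightarrow> 'a set) \<Rightarrow> 'a set \<Rightarrow> 'a set" where
  "star_op U B X = \<Union>{\<Inter>(B ` set Xs) | Xs. Xs \<noteq> [] \<and> set Xs \<subseteq> Pow U \<and> X = \<Inter>(set Xs)}"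

definition bullet_op :: "'a set \<Rightarrow> ('a set \<Rightarrow> 'a set) \<Rightarrow> 'a set \<Rightarrow> 'a set" where
  "bullet_op U B = sharp_op U (star_op U B)"

definition box_T :: "'w set \<Rightarrow> ('w set \<Rightarrow> 'w set) \<Rightarrow> ('v \<Rightarrow> 'w set) \<Rightarrow> 'v fm set
    \<Rightarrow> 'w set set \<Rightarrow> 'w set set" where
  "box_T W N V \<Sigma> X = box_min W N V \<Sigma> X \<union> hat_op (Wf W N V \<Sigma>) (box_min W N V \<Sigma>) X"

definition box_T_bullet :: "'w set \<Rightarrow> ('w set \<Rightarrow> 'w set) \<Rightarrow> ('v \<Rightarrow> 'w set) \<Rightarrow> 'v fm set
    \<Rightarrow> 'w set set \<Rightarrow> 'w set set" where
  "box_T_bullet W N V \<Sigma> = bullet_op (Wf W N V \<Sigma>) (box_T W N V \<Sigma>)"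

end

theory Submission
  imports Defs
begin

text \<open>
  Writing [w] for the class of w, pull a set of classes back to the worlds,
  \<open>\<pi> X = {w \<in> W. [w] \<in> X}\<close>. If the class of w lies in \<open>\<box>\<^sup>T\<^sub>f X\<close> then \<open>w \<in> \<box> (\<pi> X)\<close>:
  for the minimal part this is the filtration condition, and for the hat part X itself
  contains some \<open>[|\<box>\<chi>|]\<close> with \<open>w \<in> |\<box>\<chi>|\<close>, so transitivity and monotonicity give
  \<open>w \<in> \<box>\<box>|\<chi>| \<subseteq> \<box>(\<pi> X)\<close>. An element of \<open>\<box>\<^sup>T\<^sup>\<bullet>\<^sub>f [|\<phi>|]\<close> belongs to \<open>\<box>\<^sup>T\<^sub>f X\<^sub>i\<close> for finitely
  many \<open>X\<^sub>i\<close> with \<open>\<Inter>X\<^sub>i \<subseteq> [|\<phi>|]\<close>; regularity combines the \<open>w \<in> \<box>(\<pi> X\<^sub>i)\<close> into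
  \<open>w \<in> \<box>(\<Inter> \<pi> X\<^sub>i)\<close>, and monotonicity yields \<open>w \<in> \<box>|\<phi>|\<close>. The converse inclusion holds
  because each of the operators involved only enlarges \<open>\<box>\<^sup>-\<^sub>f\<close>.
\<close>

lemma star_op_subset:
  assumes "\<And>Y. B Y \<subseteq> U"
  shows "star_op U B X \<subseteq> U"
  using assms unfolding star_op_def by (force simp: neq_Nil_conv)

lemma bullet_op_subset:
  assumes "\<And>Y. B Y \<subseteq> U"
  shows "bullet_op U B X \<subseteq> U"
  using star_op_subset[of B U, OF assms] unfolding bullet_op_def sharp_op_def by blast

lemma bullet_op_upper:
  assumes "X \<subseteq> U"
  shows "B X \<subseteq> bullet_op U B X"
proof -
  have "B X \<subseteq> star_op U B X"
    unfolding star_op_def using assms by (intro Union_upper CollectI exI[of _ "[X]"]) auto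
  then show ?thesis
    unfolding bullet_op_def sharp_op_def by blast
qed

lemma mem_bullet_opE:
  assumes "c \<in> bullet_op U B X"
  obtains F where "finite F" "F \<noteq> {}" "\<Inter>F \<subseteq> X" "\<And>Y. Y \<in> F \<Longrightarrow> c \<in> B Y"
proof -
  from assms obtain Y where "Y \<subseteq> X" "c \<in> star_op U B Y"
    unfolding bullet_op_def sharp_op_def by blast
  then obtain Xs where "Xs \<noteq> []" "\<Inter>(set Xs) \<subseteq> X" "c \<in> \<Inter>(B ` set Xs)"
    unfolding star_op_def by blast
  then show thesis
    by (intro that[of "set Xs"]) auto
qed

lemma regular_nb_Inter:
  assumes "regular_nb W N" "finite F" "F \<noteq> {}" "F \<subseteq> Pow W"
  shows "\<Inter>(N ` F) \<subseteq> N (\<Inter>F)"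
  using assms(2-4)
proof (induction F rule: finite_ne_induct)
  case (insert X F)
  have "X \<subseteq> W" "\<Inter>F \<subseteq> W"
    using insert.prems insert.hyps(2) by auto
  have "\<Inter>(N ` insert X F) \<subseteq> N X \<inter> N (\<Inter>F)"
    using insert.IH insert.prems by auto
  also have "\<dots> \<subseteq> N (X \<inter> \<Inter>F)"
    using assms(1) \<open>X \<subseteq> W\<close> \<open>\<Inter>F \<subseteq> W\<close> unfolding regular_nb_def by simp
  finally show ?case
    by simp
qed simp

lemma sub_closed_Box:
  assumes "sub_closed \<Sigma>" "Box \<psi> \<in> \<Sigma>"
  shows "\<psi> \<in> \<Sigma>"
  using assms unfolding sub_closed_def by (cases \<psi>) fastforce+

lemma tset_subset: "nbhd_model W N V \<Longrightarrow> tset W N V \<phi> \<subseteq> W"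
  by (induction \<phi>) (auto simp: nbhd_model_def)

lemma cls_mem_tl_set_iff:
  assumes "\<theta> \<in> \<Sigma>" "w \<in> W"
  shows "cls W N V \<Sigma> w \<in> tl_set W N V \<Sigma> (tset W N V \<theta>) \<longleftrightarrow> w \<in> tset W N V \<theta>"
proof
  assume "cls W N V \<Sigma> w \<in> tl_set W N V \<Sigma> (tset W N V \<theta>)"
  then obtain v where "v \<in> tset W N V \<theta>" "cls W N V \<Sigma> w = cls W N V \<Sigma> v"
    by (auto simp: tl_set_def)
  moreover have "w \<in> cls W N V \<Sigma> w"
    using assms(2) by (simp add: cls_def)
  ultimately show "w \<in> tset W N V \<theta>"
    using assms(1) by (auto simp: cls_def)
qed (simp add: tl_set_def)

definition cls_vimage :: "'w set \<Rightarrow> ('w set \<Rightarrow> 'w set) \<Rightarrow> ('v \<Rightarrow> 'w set) \<Rightarrow> 'v fm set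
    \<Rightarrow> 'w set set \<Rightarrow> 'w set" where
  "cls_vimage W N V \<Sigma> X = {w \<in> W. cls W N V \<Sigma> w \<in> X}"

lemma cls_vimage_subset: "cls_vimage W N V \<Sigma> X \<subseteq> W"
  unfolding cls_vimage_def by blast

lemma subset_cls_vimage_iff:
  "A \<subseteq> W \<Longrightarrow> A \<subseteq> cls_vimage W N V \<Sigma> X \<longleftrightarrow> tl_set W N V \<Sigma> A \<subseteq> X"
  unfolding cls_vimage_def tl_set_def by blast

lemma cls_vimage_tl_set:
  assumes "nbhd_model W N V" "\<theta> \<in> \<Sigma>"
  shows "cls_vimage W N V \<Sigma> (tl_set W N V \<Sigma> (tset W N V \<theta>)) = tset W N V \<theta>"
  using cls_mem_tl_set_iff[OF assms(2), where N = N and V = V] tset_subset[OF assms(1)]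
  unfolding cls_vimage_def by blast

lemma box_min_upper:
  "Box \<phi> \<in> \<Sigma> \<Longrightarrow>
    tl_set W N V \<Sigma> (tset W N V (Box \<phi>)) \<subseteq> box_min W N V \<Sigma> (tl_set W N V \<Sigma> (tset W N V \<phi>))"
  unfolding box_min_def by blast

lemma box_min_subset: "nbhd_model W N V \<Longrightarrow> box_min W N V \<Sigma> X \<subseteq> Wf W N V \<Sigma>"
  using tset_subset unfolding box_min_def Wf_def tl_set_def by blast

lemma box_T_subset:
  assumes "nbhd_model W N V"
  shows "box_T W N V \<Sigma> X \<subseteq> Wf W N V \<Sigma>"
  using box_min_subset[OF assms] unfolding box_T_def hat_op_def by auto

lemma box_T_imp_box_cls_vimage:
  assumes model: "nbhd_model W N V" and trans: "transitive_nb W N" and mono: "monotonic_nb W N"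
    and \<Sigma>: "sub_closed \<Sigma>" and w: "w \<in> W" "cls W N V \<Sigma> w \<in> box_T W N V \<Sigma> X"
  shows "w \<in> N (cls_vimage W N V \<Sigma> X)"
proof -
  let ?c = "cls W N V \<Sigma> w"
  consider (min) "?c \<in> box_min W N V \<Sigma> X"
    | (hat) Z where "X = box_min W N V \<Sigma> Z" "?c \<in> X"
    using w(2) unfolding box_T_def hat_op_def by (auto split: if_splits)
  then show ?thesis
  proof cases
    case min
    then obtain \<psi> where \<psi>: "Box \<psi> \<in> \<Sigma>" "X = tl_set W N V \<Sigma> (tset W N V \<psi>)"
        "?c \<in> tl_set W N V \<Sigma> (tset W N V (Box \<psi>))"
      unfolding box_min_def by blast
    have "w \<in> N (tset W N V \<psi>)"
      using cls_mem_tl_set_iff[OF \<psi>(1) w(1)] \<psi>(3) by simp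
    then show ?thesis
      using cls_vimage_tl_set[OF model sub_closed_Box[OF \<Sigma> \<psi>(1)]] \<psi>(2) by simp
  next
    case hat
    then obtain \<chi> where \<chi>: "Box \<chi> \<in> \<Sigma>" "Z = tl_set W N V \<Sigma> (tset W N V \<chi>)"
        "?c \<in> tl_set W N V \<Sigma> (tset W N V (Box \<chi>))"
      unfolding box_min_def by blast
    let ?B\<chi> = "tset W N V (Box \<chi>)"
    have "tl_set W N V \<Sigma> ?B\<chi> \<subseteq> X"
      using box_min_upper[OF \<chi>(1), of W N V] hat(1) \<chi>(2) by simp
    then have "?B\<chi> \<subseteq> cls_vimage W N V \<Sigma> X"
      using subset_cls_vimage_iff[OF tset_subset[OF model]] by blast
    have "w \<in> ?B\<chi>"
      using cls_mem_tl_set_iff[OF \<chi>(1) w(1)] \<chi>(3) by simp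
    also have "?B\<chi> \<subseteq> N ?B\<chi>"
      using trans tset_subset[OF model, of \<chi>] unfolding transitive_nb_def by simp
    also have "N ?B\<chi> \<subseteq> N (cls_vimage W N V \<Sigma> X)"
      using mono \<open>?B\<chi> \<subseteq> cls_vimage W N V \<Sigma> X\<close> cls_vimage_subset[of W N V \<Sigma> X]
      unfolding monotonic_nb_def by blast
    finally show ?thesis .
  qed
qed

lemma box_T_bullet_subset_tl_set:
  assumes model: "nbhd_model W N V" and trans: "transitive_nb W N" and mono: "monotonic_nb W N"
    and reg: "regular_nb W N" and \<Sigma>: "sub_closed \<Sigma>" and \<phi>: "Box \<phi> \<in> \<Sigma>"
  shows "box_T_bullet W N V \<Sigma> (tl_set W N V \<Sigma> (tset W N V \<phi>))
    \<subseteq> tl_set W N V \<Sigma> (tset W N V (Box \<phi>))"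
proof
  let ?\<pi> = "cls_vimage W N V \<Sigma>"
  fix c assume "c \<in> box_T_bullet W N V \<Sigma> (tl_set W N V \<Sigma> (tset W N V \<phi>))"
  then obtain F where F: "finite F" "F \<noteq> {}" "\<Inter>F \<subseteq> tl_set W N V \<Sigma> (tset W N V \<phi>)"
      "\<And>X. X \<in> F \<Longrightarrow> c \<in> box_T W N V \<Sigma> X"
    unfolding box_T_bullet_def by (erule mem_bullet_opE)
  then obtain X where "c \<in> box_T W N V \<Sigma> X"
    by blast
  then obtain w where w: "w \<in> W" "c = cls W N V \<Sigma> w"
    using box_T_subset[OF model] unfolding Wf_def tl_set_def by blast
  have "w \<in> \<Inter>(N ` ?\<pi> ` F)"
    using box_T_imp_box_cls_vimage[OF model trans mono \<Sigma> w(1)] F(4) w(2) by blast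
  also have "\<dots> \<subseteq> N (\<Inter>(?\<pi> ` F))"
    using regular_nb_Inter[OF reg] F(1,2) cls_vimage_subset[of W N V \<Sigma>] by blast
  also have "\<dots> \<subseteq> N (tset W N V \<phi>)"
  proof -
    have "\<Inter>(?\<pi> ` F) \<subseteq> ?\<pi> (tl_set W N V \<Sigma> (tset W N V \<phi>))"
      using F(2,3) unfolding cls_vimage_def by blast
    then have "\<Inter>(?\<pi> ` F) \<subseteq> tset W N V \<phi>"
      using cls_vimage_tl_set[OF model sub_closed_Box[OF \<Sigma> \<phi>]] by simp
    then show ?thesis
      using mono tset_subset[OF model] unfolding monotonic_nb_def by blast
  qed
  finally show "c \<in> tl_set W N V \<Sigma> (tset W N V (Box \<phi>))"
    using w unfolding tl_set_def by simp
qed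

lemma tl_set_subset_box_T_bullet:
  assumes "nbhd_model W N V" "Box \<phi> \<in> \<Sigma>"
  shows "tl_set W N V \<Sigma> (tset W N V (Box \<phi>))
    \<subseteq> box_T_bullet W N V \<Sigma> (tl_set W N V \<Sigma> (tset W N V \<phi>))"
proof -
  let ?X = "tl_set W N V \<Sigma> (tset W N V \<phi>)"
  have "?X \<subseteq> Wf W N V \<Sigma>"
    using tset_subset[OF assms(1)] unfolding Wf_def tl_set_def by blast
  have "tl_set W N V \<Sigma> (tset W N V (Box \<phi>)) \<subseteq> box_min W N V \<Sigma> ?X"
    by (rule box_min_upper[OF assms(2)])
  also have "\<dots> \<subseteq> box_T W N V \<Sigma> ?X"
    unfolding box_T_def by (rule Un_upper1)
  also have "\<dots> \<subseteq> box_T_bullet W N V \<Sigma> ?X"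
    unfolding box_T_bullet_def by (rule bullet_op_upper[OF \<open>?X \<subseteq> Wf W N V \<Sigma>\<close>])
  finally show ?thesis .
qed

lemma nbhd_model_box_T_bullet:
  assumes "nbhd_model W N V"
  shows "nbhd_model (Wf W N V \<Sigma>) (box_T_bullet W N V \<Sigma>) (Vf W N V \<Sigma>)"
proof -
  have "Wf W N V \<Sigma> \<noteq> {}" "Vf W N V \<Sigma> p \<subseteq> Wf W N V \<Sigma>" for p
    using assms unfolding nbhd_model_def Wf_def Vf_def tl_set_def by blast+
  moreover have "box_T_bullet W N V \<Sigma> X \<subseteq> Wf W N V \<Sigma>" for X
    unfolding box_T_bullet_def by (rule bullet_op_subset[OF box_T_subset[OF assms]])
  ultimately show ?thesis
    unfolding nbhd_model_def by blast
qed

theorem mainTheorem12: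
  fixes W :: "'w set" and N :: "'w set \<Rightarrow> 'w set" and V :: "'v \<Rightarrow> 'w set"
    and \<Sigma> :: "'v fm set"
  assumes "nbhd_model W N V"
    and "transitive_nb W N" and "monotonic_nb W N" and "regular_nb W N"
    and "sub_closed \<Sigma>"
  shows "is_filtration W N V \<Sigma> (box_T_bullet W N V \<Sigma>)"
  unfolding is_filtration_def
proof (intro conjI allI impI)
  show "nbhd_model (Wf W N V \<Sigma>) (box_T_bullet W N V \<Sigma>) (Vf W N V \<Sigma>)"
    using nbhd_model_box_T_bullet[OF assms(1)] .
  fix \<phi> assume "Box \<phi> \<in> \<Sigma>"
  then show "box_T_bullet W N V \<Sigma> (tl_set W N V \<Sigma> (tset W N V \<phi>))
      = tl_set W N V \<Sigma> (tset W N V (Box \<phi>))"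
    by (intro subset_antisym box_T_bullet_subset_tl_set[OF assms] tl_set_subset_box_T_bullet[OF assms(1)])
qed

end
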